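(* Let $A, C, D$ be binary random variables, with $A$ taking values $a,\overline{a}$, $C$ taking values $c,\overline{c}$, $D$ taking values $d,\overline{d}$, and let $Y$ be a (discrete or continuous) real random variable with finite expectation. Suppose the joint distribution factorizes as \[ p(A,C,D,Y)=p(C)\,p(D\mid C)\,p(A\mid C)\,p(Y\mid A,C) \] (i.e. $C$ is a common cause of $A$ and $Y$, $A$ causes $Y$, and $D$ is a proxy of $C$, so that $D$ is conditionally independent of $(A,Y)$ given $C$). Assume that $C$ and $D$ are dependent, and that every event $\{A=x, C=y, D=z\}$ has positive probability. If $E[Y\mid A,D]$ is monotone in $D$, then $E[Y\mid A,C]$ is monotone in $C$.
   Context: $E[Y\mid A,D]$ is called nondecreasing in $D$ if $E[Y\mid a,d]\ge E[Y\mid a,\overline{d}]$ and $E[Y\mid \overline{a},d]\ge E[Y\mid \overline{a},\overline{d}]$; nonincreasing in $D$ if both inequalities are reversed ($\le$); and monotone in $D$ if it is nondecreasing or nonincreasing in $D$. The same definitions apply with $C$ (values $c,\overline{c}$) in place of $D$. *)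

theory Defs
  imports "HOL-Probability.Probability"
begin

text \<open>Binary variables are modelled as bool-valued random variables; the values
  a, c, d correspond to True and abar, cbar, dbar to False.\<close>

definition cond_exp_event :: "'w measure \<Rightarrow> ('w \<Rightarrow> real) \<Rightarrow> 'w set \<Rightarrow> real" where
  "cond_exp_event M Y S = (\<integral>w. indicator S w * Y w \<partial>M) / measure M S"

definition cond_exp2 :: "'w measure \<Rightarrow> ('w \<Rightarrow> real) \<Rightarrow> ('w \<Rightarrow> bool) \<Rightarrow> ('w \<Rightarrow> bool)
    \<Rightarrow> bool \<Rightarrow> bool \<Rightarrow> real" where
  "cond_exp2 M Y X Z x z = cond_exp_event M Y {w \<in> space M. X w = x \<and> Z w = z}"

definition nondecreasing_in2 :: "(bool \<Rightarrow> bool \<Rightarrow> real) \<Rightarrow> bool" where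
  "nondecreasing_in2 g \<longleftrightarrow> g True True \<ge> g True False \<and> g False True \<ge> g False False"

definition nonincreasing_in2 :: "(bool \<Rightarrow> bool \<Rightarrow> real) \<Rightarrow> bool" where
  "nonincreasing_in2 g \<longleftrightarrow> g True True \<le> g True False \<and> g False True \<le> g False False"

definition monotone_in2 :: "(bool \<Rightarrow> bool \<Rightarrow> real) \<Rightarrow> bool" where
  "monotone_in2 g \<longleftrightarrow> nondecreasing_in2 g \<or> nonincreasing_in2 g"

end

theory Submission
  imports Defs
begin

text \<open>Write p(y, z) for P(D = z | C = y). Because D is independent of (A, Y) given C, every
  cell of (A, C, D) carries the mass and the partial expectation of the corresponding cell of
  (A, C), scaled by p(y, z). Summing over C exhibits E[Y | A = x, D = z] as a weighted mean of
  E[Y | A = x, C = c] and E[Y | A = x, C = cbar] whose weights depend on z only through p, and a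
  direct computation gives
  E[Y | x, d] - E[Y | x, dbar] = (E[Y | x, c] - E[Y | x, cbar]) (p(c, d) - p(cbar, d)) s(x)
  with s(x) > 0. The factor p(c, d) - p(cbar, d) is nonzero because C and D are dependent, and
  it does not depend on x, so the differences in D and in C have the same or opposite sign for
  both values of A simultaneously.\<close>

lemma (in finite_measure) integral_indicator_eq_of_scaled_laws:
  fixes Y :: "'a \<Rightarrow> real"
  assumes [measurable]: "Y \<in> borel_measurable M" "S1 \<in> sets M" "S2 \<in> sets M"
    and "c1 \<ge> 0" "c2 \<ge> 0"
    and laws: "\<And>B. B \<in> sets borel \<Longrightarrow>
      measure M {w \<in> S1. Y w \<in> B} * c1 = measure M {w \<in> S2. Y w \<in> B} * c2"
  shows "(\<integral>w. indicator S1 w * Y w \<partial>M) * c1 = (\<integral>w. indicator S2 w * Y w \<partial>M) * c2"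
proof -
  define N where "N S c = distr (density M (\<lambda>w. ennreal (c * indicator S w))) borel Y"
    for S c
  have emeasure_N: "emeasure (N S c) B = ennreal (measure M {w \<in> S. Y w \<in> B} * c)"
    if [measurable]: "S \<in> sets M" "B \<in> sets borel" and "c \<ge> 0" for S B c
  proof -
    have "S \<subseteq> space M"
      using sets.sets_into_space that(1) .
    then have "emeasure (N S c) B
        = (\<integral>\<^sup>+ w. ennreal c * indicator {w \<in> S. Y w \<in> B} w \<partial>M)"
      unfolding N_def
      by (simp add: emeasure_distr emeasure_density nn_integral_set_ennreal)
         (auto intro!: nn_integral_cong split: split_indicator)
    also have "\<dots> = ennreal c * emeasure M {w \<in> S. Y w \<in> B}"
      by (intro nn_integral_cmult_indicator) measurable
    also have "\<dots> = ennreal (measure M {w \<in> S. Y w \<in> B} * c)"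
      using \<open>c \<ge> 0\<close> by (simp add: emeasure_eq_measure ennreal_mult' mult.commute)
    finally show ?thesis .
  qed
  have "N S1 c1 = N S2 c2"
  proof (rule measure_eqI)
    show "sets (N S1 c1) = sets (N S2 c2)"
      by (simp add: N_def)
  next
    fix B assume "B \<in> sets (N S1 c1)"
    then have "B \<in> sets borel"
      by (simp add: N_def)
    then show "emeasure (N S1 c1) B = emeasure (N S2 c2) B"
      using assms by (simp add: emeasure_N laws)
  qed
  moreover have "integral\<^sup>L (N S c) (\<lambda>t. t) = (\<integral>w. indicator S w * Y w \<partial>M) * c"
    if "S \<in> sets M" "c \<ge> 0" for S c
    using that by (simp add: N_def integral_distr integral_density mult_ac)
  ultimately show ?thesis
    using assms by metis
qed

lemma (in finite_measure) measure_split_bool: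
  assumes "{w \<in> space M. P w} \<in> sets M" "X \<in> measurable M (count_space UNIV)"
  shows "\<P>(w in M. P w) = \<P>(w in M. P w \<and> X w = True) + \<P>(w in M. P w \<and> X w = False)"
proof -
  have events: "{w \<in> space M. P w \<and> X w = b} \<in> sets M" for b
    using assms by measurable
  have "measure M
        ({w \<in> space M. P w \<and> X w = True} \<union> {w \<in> space M. P w \<and> X w = False})
      = \<P>(w in M. P w \<and> X w = True) + \<P>(w in M. P w \<and> X w = False)"
    by (rule finite_measure_Union[OF events events]) auto
  moreover have "{w \<in> space M. P w}
      = {w \<in> space M. P w \<and> X w = True} \<union> {w \<in> space M. P w \<and> X w = False}"
    by auto
  ultimately show ?thesis
    by simp
qed

lemma integral_indicator_split_bool:
  fixes Y :: "'a \<Rightarrow> real"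
  assumes "integrable M Y" "{w \<in> space M. P w} \<in> sets M"
    and "X \<in> measurable M (count_space UNIV)"
  shows "(\<integral>w. indicator {w \<in> space M. P w} w * Y w \<partial>M)
    = (\<integral>w. indicator {w \<in> space M. P w \<and> X w = True} w * Y w \<partial>M)
      + (\<integral>w. indicator {w \<in> space M. P w \<and> X w = False} w * Y w \<partial>M)"
proof -
  have "integrable M (\<lambda>w. indicator {w \<in> space M. P w \<and> X w = b} w * Y w)" for b
  proof -
    have "{w \<in> space M. P w \<and> X w = b} \<in> sets M"
      using assms(2,3) by measurable
    then show ?thesis
      using integrable_real_mult_indicator[OF _ assms(1)] by (simp add: mult.commute)
  qed
  then have "(\<integral>w. indicator {w \<in> space M. P w \<and> X w = True} w * Y w \<partial>M)
      + (\<integral>w. indicator {w \<in> space M. P w \<and> X w = False} w * Y w \<partial>M)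
    = (\<integral>w. indicator {w \<in> space M. P w \<and> X w = True} w * Y w
           + indicator {w \<in> space M. P w \<and> X w = False} w * Y w \<partial>M)"
    by (intro Bochner_Integration.integral_add[symmetric])
  also have "\<dots> = (\<integral>w. indicator {w \<in> space M. P w} w * Y w \<partial>M)"
    by (rule Bochner_Integration.integral_cong[OF refl]) (auto split: split_indicator)
  finally show ?thesis ..
qed

lemma (in finite_measure) measure_Collect_pos_mono:
  assumes "\<P>(w in M. P w) > 0" "\<And>w. P w \<Longrightarrow> Q w" "{w \<in> space M. Q w} \<in> sets M"
  shows "\<P>(w in M. Q w) > 0"
proof -
  have "\<P>(w in M. P w) \<le> \<P>(w in M. Q w)"
    using assms(2,3) by (intro finite_measure_mono) auto
  then show ?thesis
    using assms(1) by linarith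
qed

lemma (in prob_space) indep_bool_if_cond_prob_eq:
  fixes C D :: "'a \<Rightarrow> bool"
  assumes [measurable]: "C \<in> measurable M (count_space UNIV)"
      "D \<in> measurable M (count_space UNIV)"
    and same_cond_prob:
      "\<P>(w in M. D w = True \<bar> C w = True) = \<P>(w in M. D w = True \<bar> C w = False)"
  shows "\<P>(w in M. C w = y \<and> D w = z) = \<P>(w in M. C w = y) * \<P>(w in M. D w = z)"
proof -
  define pC where "pC y = \<P>(w in M. C w = y)" for y
  define pD where "pD z = \<P>(w in M. D w = z)" for z
  define pCD where "pCD y z = \<P>(w in M. C w = y \<and> D w = z)" for y z
  define \<rho> where "\<rho> = \<P>(w in M. D w = True \<bar> C w = True)"
  have split_C: "pC y = pCD y True + pCD y False" for y
    unfolding pC_def pCD_def by (rule measure_split_bool) measurable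
  have split_D: "pD z = pCD True z + pCD False z" for z
  proof -
    have "pD z = \<P>(w in M. D w = z \<and> C w = True) + \<P>(w in M. D w = z \<and> C w = False)"
      unfolding pD_def by (rule measure_split_bool) measurable
    then show ?thesis
      unfolding pCD_def by (simp add: conj_commute)
  qed
  have total_C: "pC True + pC False = 1" and total_D: "pD True + pD False = 1"
    using prob_neg[of C] prob_neg[of D] unfolding pC_def pD_def by simp_all
  have joint_D: "pCD y True = \<rho> * pC y" for y
  proof (cases "pC y = 0")
    case True
    have "pCD y True \<le> pC y"
      unfolding pCD_def pC_def by (intro finite_measure_mono) auto
    with True show ?thesis
      by (simp add: pCD_def antisym)
  next
    case False
    have "\<rho> = \<P>(w in M. D w = True \<bar> C w = y)"
      using same_cond_prob unfolding \<rho>_def by (cases y) auto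
    with False show ?thesis
      unfolding pCD_def pC_def by (simp add: cond_prob_def conj_commute)
  qed
  have "pD True = \<rho> * (pC True + pC False)"
    using split_D[of True] joint_D by (simp add: distrib_left)
  then have "pD True = \<rho>"
    using total_C by simp
  moreover have "pD False = 1 - \<rho>"
    using total_D \<open>pD True = \<rho>\<close> by simp
  moreover have "pCD y False = pC y - \<rho> * pC y"
    using split_C[of y] joint_D[of y] by linarith
  ultimately have "pCD y z = pC y * pD z" for z
    using joint_D[of y] by (cases z) (simp_all add: right_diff_distrib mult.commute)
  then show ?thesis
    unfolding pCD_def pC_def pD_def .
qed

lemma weighted_mean_diff:
  fixes e1 e2 a b p q :: "'a :: field"
  assumes "a * p + b * q \<noteq> 0" "a * (1 - p) + b * (1 - q) \<noteq> 0"
  shows "(e1 * (a * p) + e2 * (b * q)) / (a * p + b * q)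
      - (e1 * (a * (1 - p)) + e2 * (b * (1 - q))) / (a * (1 - p) + b * (1 - q))
    = (e1 - e2) * (p - q) * (a * b / ((a * p + b * q) * (a * (1 - p) + b * (1 - q))))"
proof -
  have "(e1 * (a * p) + e2 * (b * q)) * (a * (1 - p) + b * (1 - q))
      - (e1 * (a * (1 - p)) + e2 * (b * (1 - q))) * (a * p + b * q)
    = (e1 - e2) * (p - q) * (a * b)"
    by (simp add: algebra_simps)
  then show ?thesis
    using assms by (simp add: diff_frac_eq)
qed

lemma monotone_in2_of_proportional_diffs:
  assumes "monotone_in2 g" "c \<noteq> 0"
    and "\<And>x. \<exists>s > 0. g x True - g x False = (f x True - f x False) * c * s"
  shows "monotone_in2 f"
proof -
  have sign: "f x False \<le> f x True \<longleftrightarrow> 0 \<le> (g x True - g x False) * c"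
    and sign': "f x True \<le> f x False \<longleftrightarrow> (g x True - g x False) * c \<le> 0" for x
  proof -
    obtain s where "s > 0" and diff: "g x True - g x False = (f x True - f x False) * c * s"
      using assms(3) by blast
    define t where "t = c * c * s"
    have prod: "(g x True - g x False) * c = (f x True - f x False) * t"
      unfolding diff t_def by (simp add: mult_ac)
    have pos: "t > 0"
      unfolding t_def using \<open>c \<noteq> 0\<close> \<open>s > 0\<close>
      by (auto simp: zero_less_mult_iff linorder_neq_iff)
    show "f x False \<le> f x True \<longleftrightarrow> 0 \<le> (g x True - g x False) * c"
      unfolding prod using pos by (auto simp: zero_le_mult_iff)
    show "f x True \<le> f x False \<longleftrightarrow> (g x True - g x False) * c \<le> 0"
      unfolding prod using pos by (auto simp: mult_le_0_iff)
  qed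
  show ?thesis
    using assms(1) \<open>c \<noteq> 0\<close>
    unfolding monotone_in2_def nondecreasing_in2_def nonincreasing_in2_def sign sign'
    by (cases "c > 0") (auto simp: zero_le_mult_iff mult_le_0_iff)
qed

locale proxy_model = prob_space M for M :: "'w measure" +
  fixes A C D :: "'w \<Rightarrow> bool" and Y :: "'w \<Rightarrow> real"
  assumes A_measurable [measurable]: "A \<in> measurable M (count_space UNIV)"
    and C_measurable [measurable]: "C \<in> measurable M (count_space UNIV)"
    and D_measurable [measurable]: "D \<in> measurable M (count_space UNIV)"
    and Y_measurable [measurable]: "Y \<in> borel_measurable M"
    and Y_integrable: "integrable M Y"
    and proxy_factorization: "\<And>x y z B. B \<in> sets borel \<Longrightarrow>
      \<P>(w in M. A w = x \<and> C w = y \<and> D w = z \<and> Y w \<in> B) * \<P>(w in M. C w = y)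
        = \<P>(w in M. A w = x \<and> C w = y \<and> Y w \<in> B) * \<P>(w in M. C w = y \<and> D w = z)"
    and cells_positive: "\<And>x y z. \<P>(w in M. A w = x \<and> C w = y \<and> D w = z) > 0"
begin

lemma prob_AC_pos: "\<P>(w in M. A w = x \<and> C w = y) > 0"
  using cells_positive[of x y True] by (rule measure_Collect_pos_mono) auto

lemma prob_CD_pos: "\<P>(w in M. C w = y \<and> D w = z) > 0"
  using cells_positive[of True y z] by (rule measure_Collect_pos_mono) auto

lemma prob_C_pos: "\<P>(w in M. C w = y) > 0"
  using prob_CD_pos[of y True] by (rule measure_Collect_pos_mono) auto

lemma cond_prob_D_C:
  "\<P>(w in M. D w = z \<bar> C w = y) = \<P>(w in M. C w = y \<and> D w = z) / \<P>(w in M. C w = y)"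
  by (simp add: cond_prob_def conj_commute)

lemma cond_prob_D_C_pos: "\<P>(w in M. D w = z \<bar> C w = y) > 0"
  using prob_CD_pos prob_C_pos by (simp add: cond_prob_D_C)

lemma cond_prob_D_C_False:
  "\<P>(w in M. D w = False \<bar> C w = y) = 1 - \<P>(w in M. D w = True \<bar> C w = y)"
proof -
  have "\<P>(w in M. C w = y)
      = \<P>(w in M. C w = y \<and> D w = True) + \<P>(w in M. C w = y \<and> D w = False)"
    by (rule measure_split_bool) measurable
  then show ?thesis
    unfolding cond_prob_D_C using prob_C_pos[of y] by (simp add: field_simps)
qed

lemma prob_cell_eq:
  "\<P>(w in M. A w = x \<and> C w = y \<and> D w = z)
    = \<P>(w in M. A w = x \<and> C w = y) * \<P>(w in M. D w = z \<bar> C w = y)"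
  using proxy_factorization[of UNIV x y z] prob_C_pos[of y]
  by (simp add: cond_prob_D_C field_simps)

lemma integral_cell_eq:
  "(\<integral>w. indicator {w \<in> space M. A w = x \<and> C w = y \<and> D w = z} w * Y w \<partial>M)
    = (\<integral>w. indicator {w \<in> space M. A w = x \<and> C w = y} w * Y w \<partial>M)
      * \<P>(w in M. D w = z \<bar> C w = y)"
proof -
  have "(\<integral>w. indicator {w \<in> space M. A w = x \<and> C w = y \<and> D w = z} w * Y w \<partial>M)
        * \<P>(w in M. C w = y)
      = (\<integral>w. indicator {w \<in> space M. A w = x \<and> C w = y} w * Y w \<partial>M)
        * \<P>(w in M. C w = y \<and> D w = z)"
  proof (rule integral_indicator_eq_of_scaled_laws)
    fix B :: "real set" assume "B \<in> sets borel"
    moreover have "{w \<in> {w \<in> space M. A w = x \<and> C w = y \<and> D w = z}. Y w \<in> B}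
        = {w \<in> space M. A w = x \<and> C w = y \<and> D w = z \<and> Y w \<in> B}"
      and "{w \<in> {w \<in> space M. A w = x \<and> C w = y}. Y w \<in> B}
        = {w \<in> space M. A w = x \<and> C w = y \<and> Y w \<in> B}"
      by auto
    ultimately show
      "measure M {w \<in> {w \<in> space M. A w = x \<and> C w = y \<and> D w = z}. Y w \<in> B}
          * \<P>(w in M. C w = y)
        = measure M {w \<in> {w \<in> space M. A w = x \<and> C w = y}. Y w \<in> B}
          * \<P>(w in M. C w = y \<and> D w = z)"
      using proxy_factorization by simp
  qed auto
  then show ?thesis
    using prob_C_pos[of y] by (simp add: cond_prob_D_C field_simps)
qed

lemma integral_AC_eq:
  "(\<integral>w. indicator {w \<in> space M. A w = x \<and> C w = y} w * Y w \<partial>M)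
    = cond_exp2 M Y A C x y * \<P>(w in M. A w = x \<and> C w = y)"
  using prob_AC_pos[of x y] by (simp add: cond_exp2_def cond_exp_event_def)

lemma cond_exp_AD_eq_weighted_mean:
  "cond_exp2 M Y A D x z =
    (cond_exp2 M Y A C x True
        * (\<P>(w in M. A w = x \<and> C w = True) * \<P>(w in M. D w = z \<bar> C w = True))
      + cond_exp2 M Y A C x False
        * (\<P>(w in M. A w = x \<and> C w = False) * \<P>(w in M. D w = z \<bar> C w = False)))
    / (\<P>(w in M. A w = x \<and> C w = True) * \<P>(w in M. D w = z \<bar> C w = True)
      + \<P>(w in M. A w = x \<and> C w = False) * \<P>(w in M. D w = z \<bar> C w = False))"
proof -
  have cells: "{w \<in> space M. (A w = x \<and> D w = z) \<and> C w = y}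
      = {w \<in> space M. A w = x \<and> C w = y \<and> D w = z}" for y
    by auto
  have "(\<integral>w. indicator {w \<in> space M. A w = x \<and> D w = z} w * Y w \<partial>M)
      = (\<integral>w. indicator {w \<in> space M. A w = x \<and> C w = True \<and> D w = z} w * Y w \<partial>M)
        + (\<integral>w. indicator {w \<in> space M. A w = x \<and> C w = False \<and> D w = z} w * Y w \<partial>M)"
    unfolding cells[symmetric] by (rule integral_indicator_split_bool[OF Y_integrable]) measurable
  also have "\<dots> = cond_exp2 M Y A C x True
        * (\<P>(w in M. A w = x \<and> C w = True) * \<P>(w in M. D w = z \<bar> C w = True))
      + cond_exp2 M Y A C x False
        * (\<P>(w in M. A w = x \<and> C w = False) * \<P>(w in M. D w = z \<bar> C w = False))"
    unfolding integral_cell_eq integral_AC_eq by (simp only: mult.assoc)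
  finally have numerator:
    "(\<integral>w. indicator {w \<in> space M. A w = x \<and> D w = z} w * Y w \<partial>M) = \<dots>" .
  have "\<P>(w in M. A w = x \<and> D w = z)
      = \<P>(w in M. A w = x \<and> C w = True \<and> D w = z) + \<P>(w in M. A w = x \<and> C w = False \<and> D w = z)"
    unfolding cells[symmetric] by (rule measure_split_bool) measurable
  also have "\<dots> = \<P>(w in M. A w = x \<and> C w = True) * \<P>(w in M. D w = z \<bar> C w = True)
      + \<P>(w in M. A w = x \<and> C w = False) * \<P>(w in M. D w = z \<bar> C w = False)"
    unfolding prob_cell_eq ..
  finally have denominator: "\<P>(w in M. A w = x \<and> D w = z) = \<dots>" .
  show ?thesis
    unfolding cond_exp2_def[of M Y A D] cond_exp_event_def numerator denominator ..
qed

lemma cond_exp_AD_diff: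
  "\<exists>s > 0. cond_exp2 M Y A D x True - cond_exp2 M Y A D x False
    = (cond_exp2 M Y A C x True - cond_exp2 M Y A C x False)
      * (\<P>(w in M. D w = True \<bar> C w = True) - \<P>(w in M. D w = True \<bar> C w = False)) * s"
proof -
  define a where "a = \<P>(w in M. A w = x \<and> C w = True)"
  define b where "b = \<P>(w in M. A w = x \<and> C w = False)"
  define p where "p = \<P>(w in M. D w = True \<bar> C w = True)"
  define q where "q = \<P>(w in M. D w = True \<bar> C w = False)"
  have "a > 0" "b > 0"
    unfolding a_def b_def by (rule prob_AC_pos)+
  moreover have "p > 0" "q > 0" "1 - p > 0" "1 - q > 0"
    unfolding p_def q_def cond_prob_D_C_False[symmetric] by (rule cond_prob_D_C_pos)+
  ultimately have "a * p + b * q > 0" "a * (1 - p) + b * (1 - q) > 0"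
    by (intro add_pos_pos mult_pos_pos; simp)+
  moreover from this \<open>a > 0\<close> \<open>b > 0\<close>
  have "a * b / ((a * p + b * q) * (a * (1 - p) + b * (1 - q))) > 0"
    by simp
  ultimately show ?thesis
    unfolding cond_exp_AD_eq_weighted_mean cond_prob_D_C_False
    unfolding a_def[symmetric] b_def[symmetric] p_def[symmetric] q_def[symmetric]
    by (subst weighted_mean_diff) auto
qed

end

theorem theorem1:
  fixes M :: "'w measure" and A C D :: "'w \<Rightarrow> bool" and Y :: "'w \<Rightarrow> real"
  assumes "prob_space M"
    and "A \<in> measurable M (count_space UNIV)"
    and "C \<in> measurable M (count_space UNIV)"
    and "D \<in> measurable M (count_space UNIV)"
    and "Y \<in> borel_measurable M"
    and "integrable M Y"
    \<comment> \<open>factorization p(C)p(D|C)p(A|C)p(Y|A,C), i.e. D independent of (A,Y) given C\<close>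
    and "\<And>x y z B. B \<in> sets borel \<Longrightarrow>
           measure M {w \<in> space M. A w = x \<and> C w = y \<and> D w = z \<and> Y w \<in> B}
             * measure M {w \<in> space M. C w = y}
         = measure M {w \<in> space M. A w = x \<and> C w = y \<and> Y w \<in> B}
             * measure M {w \<in> space M. C w = y \<and> D w = z}"
    \<comment> \<open>C and D are dependent\<close>
    and "\<not> (\<forall>y z. measure M {w \<in> space M. C w = y \<and> D w = z}
                 = measure M {w \<in> space M. C w = y} * measure M {w \<in> space M. D w = z})"
    \<comment> \<open>positivity\<close>
    and "\<And>x y z. measure M {w \<in> space M. A w = x \<and> C w = y \<and> D w = z} > 0"
    and "monotone_in2 (cond_exp2 M Y A D)"
  shows "monotone_in2 (cond_exp2 M Y A C)"
proof -
  interpret proxy_model M A C D Y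
    using assms(1-7,9) by (simp add: proxy_model_def proxy_model_axioms_def)
  have "\<P>(w in M. D w = True \<bar> C w = True) \<noteq> \<P>(w in M. D w = True \<bar> C w = False)"
    using indep_bool_if_cond_prob_eq[OF C_measurable D_measurable] assms(8) by blast
  then have proxy_informative:
    "\<P>(w in M. D w = True \<bar> C w = True) - \<P>(w in M. D w = True \<bar> C w = False) \<noteq> 0"
    by simp
  show ?thesis
    by (rule monotone_in2_of_proportional_diffs[OF assms(10) proxy_informative])
       (rule cond_exp_AD_diff)
qed

end
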